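(* Let $\Delta^{\mathcal T}_{\mathcal R}$ be any of the ten systems $\Delta^{\mathcal T}_{\equiv}$, $\Delta^{\mathcal T}_{=_\beta}$ ($\mathcal T\in\{CD,CDS,CDV,BCD\}$), $\Delta^{CDV}_{=_{\beta\eta}}$, $\Delta^{BCD}_{=_{\beta\eta}}$. For every strongly normalizing pure $\lambda$-term $M$ there exist a basis $B$, a type $\sigma$ and a $\Delta$-term $\Delta$ such that $\|\Delta\|\equiv M$ and $B\vdash^{\mathcal T}_{\mathcal R}\Delta:\sigma$.
   Context: Type atoms: a set $\mathbb{A}$ of symbols; $\omega$ denotes a distinguished atom (the universal type). $\mathbb{A}_\infty=\{\mathtt a_i\mid i\in\mathbb N\}$ with each $\mathtt a_i\neq\omega$, and $\mathbb{A}^\omega_\infty=\mathbb{A}_\infty\cup\{\omega\}$. Intersection types over $\mathbb A$: $\sigma::= a\mid\sigma\to\sigma\mid\sigma\cap\sigma$ ($a\in\mathbb A$). An intersection type theory $\mathcal T$ over $\mathbb A$ is a set of inequalities $\sigma\le\tau$ (written $\sigma\le_{\mathcal T}\tau$) closed under (refl) $\sigma\le\sigma$; (incl) $\sigma\cap\tau\le\sigma$ and $\sigma\cap\tau\le\tau$; (glb) $\rho\le\sigma$ and $\rho\le\tau$ imply $\rho\le\sigma\cap\tau$; (trans) $\sigma\le\tau$ and $\tau\le\rho$ imply $\sigma\le\rho$. Additional axioms/rules: $(\omega_{top})$ $\sigma\le\omega$; $(\omega_{\to})$ $\omega\le\sigma\to\omega$; $(\to\cap)$ $(\sigma\to\tau)\cap(\sigma\to\rho)\le\sigma\to(\tau\cap\rho)$;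 $(\to)$ $\sigma_2\le\sigma_1$ and $\tau_1\le\tau_2$ imply $\sigma_1\to\tau_1\le\sigma_2\to\tau_2$. $\mathcal T_{CD}$ = smallest type theory over $\mathbb A_\infty$; $\mathcal T_{CDS}$ = smallest over $\mathbb A^\omega_\infty$ containing $(\omega_{top})$; $\mathcal T_{CDV}$ = smallest over $\mathbb A_\infty$ closed under $(\to)$ and $(\to\cap)$; $\mathcal T_{BCD}$ = smallest over $\mathbb A^\omega_\infty$ closed under $(\to),(\to\cap),(\omega_{top}),(\omega_\to)$. We abbreviate these as CD, CDS, CDV, BCD. $\Delta$-terms: $\Delta::=u_\Delta\mid x\mid\lambda x{:}\sigma.\Delta\mid\Delta\,\Delta\mid\langle\Delta,\Delta\rangle\mid pr_1\Delta\mid pr_2\Delta\mid\Delta^\sigma$, where for every (not necessarily typable) $\Delta$-term $\Delta$ there is a constant $u_\Delta$. The essence $\|\Delta\|$ is the pure $\lambda$-term defined by $\|x\|=x$, $\|u_\Delta\|=\|\Delta\|$, $\|\Delta^\sigma\|=\|\Delta\|$, $\|\lambda x{:}\sigma.\Delta\|=\lambda x.\|\Delta\|$, $\|\Delta_1\Delta_2\|=\|\Delta_1\|\,\|\Delta_2\|$, $\|\langle\Delta_1,\Delta_2\rangle\|=\|\Delta_1\|$, $\|pr_i\Delta\|=\|\Delta\|$. Let $\mathcal R$ be one of $\equiv$ (syntactic identity up to $\alpha$), $=_\beta$, $=_{\beta\eta}$ on pure $\lambda$-terms. A basis $B$ is a finite set of declarations $x{:}\sigma$ with distinct variables. The typed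 system $\Delta^{\mathcal T}_{\mathcal R}$ derives $B\vdash^{\mathcal T}_{\mathcal R}\Delta:\sigma$ by: (top) $B\vdash u_\Delta:\omega$ if $\omega\in\mathbb A$; (ax) $B\vdash x:\sigma$ if $x{:}\sigma\in B$; ($\to$I) from $B,x{:}\sigma\vdash\Delta:\tau$ infer $B\vdash\lambda x{:}\sigma.\Delta:\sigma\to\tau$; ($\to$E) from $B\vdash\Delta_1:\sigma\to\tau$ and $B\vdash\Delta_2:\sigma$ infer $B\vdash\Delta_1\Delta_2:\tau$; ($\cap$I) from $B\vdash\Delta_1:\sigma$, $B\vdash\Delta_2:\tau$ and $\|\Delta_1\|\mathrel{\mathcal R}\|\Delta_2\|$ infer $B\vdash\langle\Delta_1,\Delta_2\rangle:\sigma\cap\tau$; ($\cap$E$_1$) from $B\vdash\Delta:\sigma\cap\tau$ infer $B\vdash pr_1\Delta:\sigma$; ($\cap$E$_2$) from $B\vdash\Delta:\sigma\cap\tau$ infer $B\vdash pr_2\Delta:\tau$; ($\le_{\mathcal T}$) from $B\vdash\Delta:\sigma$ and $\sigma\le_{\mathcal T}\tau$ infer $B\vdash\Delta^\tau:\tau$. We write $\Delta^{CD}_{\mathcal R}$ for $\Delta^{\mathcal T_{CD}}_{\mathcal R}$, etc. *)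

theory Defs
  imports Main
begin

section \<open>Pure lambda-terms (de Bruijn indices, so syntactic identity is identity up to alpha)\<close>

datatype lterm = LVar nat | LApp lterm lterm | LAbs lterm

fun lift :: "lterm \<Rightarrow> nat \<Rightarrow> lterm" where
  "lift (LVar i) k = (if i < k then LVar i else LVar (Suc i))"
| "lift (LApp s t) k = LApp (lift s k) (lift t k)"
| "lift (LAbs s) k = LAbs (lift s (Suc k))"

fun subst :: "lterm \<Rightarrow> lterm \<Rightarrow> nat \<Rightarrow> lterm" where
  "subst (LVar i) s k = (if k < i then LVar (i - 1) else if i = k then s else LVar i)"
| "subst (LApp t u) s k = LApp (subst t s k) (subst u s k)"
| "subst (LAbs t) s k = LAbs (subst t (lift s 0) (Suc k))"

inductive beta :: "lterm \<Rightarrow> lterm \<Rightarrow> bool" where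
  beta_redex: "beta (LApp (LAbs s) t) (subst s t 0)"
| beta_appL: "beta s t \<Longrightarrow> beta (LApp s u) (LApp t u)"
| beta_appR: "beta s t \<Longrightarrow> beta (LApp u s) (LApp u t)"
| beta_abs: "beta s t \<Longrightarrow> beta (LAbs s) (LAbs t)"

inductive betaeta :: "lterm \<Rightarrow> lterm \<Rightarrow> bool" where
  be_beta: "beta s t \<Longrightarrow> betaeta s t"
| be_eta: "betaeta (LAbs (LApp (lift t 0) (LVar 0))) t"
| be_appL: "betaeta s t \<Longrightarrow> betaeta (LApp s u) (LApp t u)"
| be_appR: "betaeta s t \<Longrightarrow> betaeta (LApp u s) (LApp u t)"
| be_abs: "betaeta s t \<Longrightarrow> betaeta (LAbs s) (LAbs t)"

definition beta_eq :: "lterm \<Rightarrow> lterm \<Rightarrow> bool" where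
  "beta_eq = (sup beta beta\<inverse>\<inverse>)\<^sup>*\<^sup>*"

definition betaeta_eq :: "lterm \<Rightarrow> lterm \<Rightarrow> bool" where
  "betaeta_eq = (sup betaeta betaeta\<inverse>\<inverse>)\<^sup>*\<^sup>*"

definition SN :: "lterm \<Rightarrow> bool" where
  "SN M = Wellfounded.accp (\<lambda>y x. beta x y) M"

datatype itype = Atom nat | Om | Arr itype itype | Cap itype itype

datatype theory_name = CD | CDS | CDV | BCD

definition has_omega :: "theory_name \<Rightarrow> bool" where
  "has_omega T = (T = CDS \<or> T = BCD)"

definition has_arrow :: "theory_name \<Rightarrow> bool" where
  "has_arrow T = (T = CDV \<or> T = BCD)"

fun omega_free :: "itype \<Rightarrow> bool" where
  "omega_free (Atom i) = True"
| "omega_free Om = False"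
| "omega_free (Arr s t) = (omega_free s \<and> omega_free t)"
| "omega_free (Cap s t) = (omega_free s \<and> omega_free t)"

text \<open>Types over the atom set of the theory: A_infinity (no omega) or A_infinity plus omega.\<close>
definition over :: "theory_name \<Rightarrow> itype \<Rightarrow> bool" where
  "over T s = (has_omega T \<or> omega_free s)"

inductive leq :: "theory_name \<Rightarrow> itype \<Rightarrow> itype \<Rightarrow> bool" for T where
  refl: "over T s \<Longrightarrow> leq T s s"
| incl1: "over T s \<Longrightarrow> over T t \<Longrightarrow> leq T (Cap s t) s"
| incl2: "over T s \<Longrightarrow> over T t \<Longrightarrow> leq T (Cap s t) t"
| glb: "leq T r s \<Longrightarrow> leq T r t \<Longrightarrow> leq T r (Cap s t)"
| trans: "leq T s t \<Longrightarrow> leq T t r \<Longrightarrow> leq T s r"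
| omega_top: "has_omega T \<Longrightarrow> leq T s Om"
| omega_arr: "T = BCD \<Longrightarrow> leq T Om (Arr s Om)"
| arr_cap: "has_arrow T \<Longrightarrow> over T s \<Longrightarrow> over T t \<Longrightarrow> over T r \<Longrightarrow>
     leq T (Cap (Arr s t) (Arr s r)) (Arr s (Cap t r))"
| arr: "has_arrow T \<Longrightarrow> leq T s2 s1 \<Longrightarrow> leq T t1 t2 \<Longrightarrow> leq T (Arr s1 t1) (Arr s2 t2)"

datatype dterm = U dterm | DVar nat | DLam itype dterm | DApp dterm dterm
  | DPair dterm dterm | Pr1 dterm | Pr2 dterm | DSub dterm itype

fun ess :: "dterm \<Rightarrow> lterm" where
  "ess (DVar x) = LVar x"
| "ess (U d) = ess d"
| "ess (DSub d s) = ess d"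
| "ess (DLam s d) = LAbs (ess d)"
| "ess (DApp d e) = LApp (ess d) (ess e)"
| "ess (DPair d e) = ess d"
| "ess (Pr1 d) = ess d"
| "ess (Pr2 d) = ess d"

datatype rel_name = Ident | Beta | BetaEta

definition Rel :: "rel_name \<Rightarrow> lterm \<Rightarrow> lterm \<Rightarrow> bool" where
  "Rel R = (case R of Ident \<Rightarrow> (=) | Beta \<Rightarrow> beta_eq | BetaEta \<Rightarrow> betaeta_eq)"

type_synonym basis = "nat \<Rightarrow> itype option"

definition is_basis :: "theory_name \<Rightarrow> basis \<Rightarrow> bool" where
  "is_basis T B = (finite (dom B) \<and> (\<forall>s\<in>ran B. over T s))"

definition extend :: "basis \<Rightarrow> itype \<Rightarrow> basis" where
  "extend B s = case_nat (Some s) B"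

inductive typed :: "theory_name \<Rightarrow> rel_name \<Rightarrow> basis \<Rightarrow> dterm \<Rightarrow> itype \<Rightarrow> bool"
  for T R where
  top: "has_omega T \<Longrightarrow> typed T R B (U d) Om"
| ax: "B x = Some s \<Longrightarrow> typed T R B (DVar x) s"
| arrI: "over T s \<Longrightarrow> typed T R (extend B s) d t \<Longrightarrow> typed T R B (DLam s d) (Arr s t)"
| arrE: "typed T R B d (Arr s t) \<Longrightarrow> typed T R B e s \<Longrightarrow> typed T R B (DApp d e) t"
| capI: "typed T R B d s \<Longrightarrow> typed T R B e t \<Longrightarrow> Rel R (ess d) (ess e)
          \<Longrightarrow> typed T R B (DPair d e) (Cap s t)"
| capE1: "typed T R B d (Cap s t) \<Longrightarrow> typed T R B (Pr1 d) s"
| capE2: "typed T R B d (Cap s t) \<Longrightarrow> typed T R B (Pr2 d) t"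
| sub: "typed T R B d s \<Longrightarrow> leq T s t \<Longrightarrow> typed T R B (DSub d t) t"

definition ten_systems :: "(theory_name \<times> rel_name) set" where
  "ten_systems = {(T, R). R = Ident \<or> R = Beta} \<union> {(CDV, BetaEta), (BCD, BetaEta)}"

end

theory Submission
  imports Defs
begin

text \<open>
  It suffices to type every strongly normalizing term in \<open>CD\<close>, by a syntax-directed assignment
  for pure terms with subsumption only at variables and applications: such a derivation translates
  into a \<open>\<Delta>\<close>-term in every system, since \<open>CD\<close>-inequalities hold in every theory and both
  components of each pair have the same essence, so that \<open>\<R>\<close> never matters. The assignment is closed
  under expansion of a head redex \<open>(\<lambda>x. A) N\<close> with typable \<open>N\<close>: the argument receives the
  intersection of the types of its occurrences in the contractum (or any type of \<open>N\<close> if \<open>x\<close> does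
  not occur). Induction along reduction steps and strict subterms of a strongly normalizing term
  then types head variables applied to typable arguments, abstractions and head-redex expansions.
\<close>

inductive cd_typing :: "basis \<Rightarrow> lterm \<Rightarrow> itype \<Rightarrow> bool" where
  cd_var: "B x = Some s \<Longrightarrow> leq CD s t \<Longrightarrow> cd_typing B (LVar x) t"
| cd_app: "cd_typing B M (Arr s t) \<Longrightarrow> cd_typing B N s \<Longrightarrow> leq CD t t' \<Longrightarrow> cd_typing B (LApp M N) t'"
| cd_abs: "omega_free s \<Longrightarrow> cd_typing (extend B s) M t \<Longrightarrow> cd_typing B (LAbs M) (Arr s t)"
| cd_cap: "cd_typing B M s \<Longrightarrow> cd_typing B M t \<Longrightarrow> cd_typing B M (Cap s t)"

lemma leq_CD_omega_free: "leq CD s t \<Longrightarrow> omega_free s \<and> omega_free t"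
  by (induction rule: leq.induct) (auto simp: over_def has_omega_def has_arrow_def)

lemma leq_CD_refl: "omega_free s \<Longrightarrow> leq CD s s"
  by (rule leq.refl) (simp add: over_def)

lemma leq_CD_Cap1: "omega_free s \<Longrightarrow> omega_free t \<Longrightarrow> leq CD (Cap s t) s"
  by (rule leq.incl1) (auto simp: over_def)

lemma leq_CD_Cap2: "omega_free s \<Longrightarrow> omega_free t \<Longrightarrow> leq CD (Cap s t) t"
  by (rule leq.incl2) (auto simp: over_def)

lemma cd_typing_omega_free: "cd_typing B M t \<Longrightarrow> omega_free t"
  by (induction rule: cd_typing.induct) (auto dest: leq_CD_omega_free)

definition refines :: "basis \<Rightarrow> basis \<Rightarrow> bool" where
  "refines B' B \<longleftrightarrow> (\<forall>x s. B x = Some s \<longrightarrow> B' x = Some s \<or> (\<exists>s'. B' x = Some s' \<and> leq CD s' s))"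

lemma refines_extend: "refines B' B \<Longrightarrow> refines (extend B' s) (extend B s)"
  unfolding refines_def extend_def by (auto split: nat.split)

lemma cd_typing_refines: "cd_typing B M t \<Longrightarrow> refines B' B \<Longrightarrow> cd_typing B' M t"
proof (induction arbitrary: B' rule: cd_typing.induct)
  case (cd_var B x s t)
  then show ?case unfolding refines_def by (metis cd_typing.cd_var leq.trans)
qed (auto intro: cd_typing.intros refines_extend)

definition meet_basis :: "basis \<Rightarrow> basis \<Rightarrow> basis" where
  "meet_basis B1 B2 x = (case B1 x of None \<Rightarrow> B2 x | Some s \<Rightarrow>
      (case B2 x of None \<Rightarrow> Some s | Some t \<Rightarrow> Some (Cap s t)))"

lemma is_basis_CD_iff: "is_basis CD B \<longleftrightarrow> finite (dom B) \<and> (\<forall>x s. B x = Some s \<longrightarrow> omega_free s)"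
  by (auto simp: is_basis_def over_def has_omega_def ran_def)

lemma is_basis_meet_basis:
  "is_basis CD B1 \<Longrightarrow> is_basis CD B2 \<Longrightarrow> is_basis CD (meet_basis B1 B2)"
proof -
  assume "is_basis CD B1" "is_basis CD B2"
  moreover have "dom (meet_basis B1 B2) = dom B1 \<union> dom B2"
    by (auto simp: meet_basis_def split: option.splits)
  ultimately show ?thesis
    by (auto simp: is_basis_CD_iff meet_basis_def split: option.splits)
qed

lemma refines_meet_basis1: "is_basis CD B1 \<Longrightarrow> is_basis CD B2 \<Longrightarrow> refines (meet_basis B1 B2) B1"
  by (auto simp: refines_def is_basis_CD_iff meet_basis_def split: option.splits intro: leq_CD_Cap1)

lemma refines_meet_basis2: "is_basis CD B1 \<Longrightarrow> is_basis CD B2 \<Longrightarrow> refines (meet_basis B1 B2) B2"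
  by (auto simp: refines_def is_basis_CD_iff meet_basis_def split: option.splits intro: leq_CD_Cap2)

definition insert_at :: "basis \<Rightarrow> nat \<Rightarrow> itype \<Rightarrow> basis" where
  "insert_at B k s i = (if i < k then B i else if i = k then Some s else B (i - 1))"

definition delete_at :: "basis \<Rightarrow> nat \<Rightarrow> basis" where
  "delete_at B k i = B (if i < k then i else Suc i)"

lemma extend_insert_at: "extend (insert_at B k s) t = insert_at (extend B t) (Suc k) s"
  by (rule ext, case_tac x) (auto simp: insert_at_def extend_def split: nat.split)

lemma insert_at_0: "insert_at B 0 s = extend B s"
  by (rule ext, case_tac x) (auto simp: insert_at_def extend_def)

lemma delete_at_extend: "delete_at (extend B s) (Suc k) = extend (delete_at B k) s"
  by (rule ext, case_tac x) (auto simp: delete_at_def extend_def)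

lemma delete_at_0_extend: "delete_at (extend B s) 0 = B"
  by (rule ext) (auto simp: delete_at_def extend_def)

lemma refines_insert_at_Cap1:
  "omega_free s \<Longrightarrow> omega_free t \<Longrightarrow> refines (insert_at B k (Cap s t)) (insert_at B k s)"
  by (auto simp: refines_def insert_at_def intro: leq_CD_Cap1)

lemma refines_insert_at_Cap2:
  "omega_free s \<Longrightarrow> omega_free t \<Longrightarrow> refines (insert_at B k (Cap s t)) (insert_at B k t)"
  by (auto simp: refines_def insert_at_def intro: leq_CD_Cap2)

lemma cd_typing_lift: "cd_typing B M t \<Longrightarrow> cd_typing (insert_at B k s) (lift M k) t"
proof (induction arbitrary: k rule: cd_typing.induct)
  case (cd_var B x s t)
  then show ?case by (auto simp: insert_at_def intro!: cd_typing.cd_var)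
next
  case (cd_abs s B M t)
  then show ?case by (auto simp: extend_insert_at intro!: cd_typing.cd_abs)
qed (auto intro: cd_typing.intros)

lemma cd_typing_unlift: "cd_typing B (lift M k) t \<Longrightarrow> cd_typing (delete_at B k) M t"
proof (induction B "lift M k" t arbitrary: M k rule: cd_typing.induct)
  case (cd_var B x s t)
  then show ?case by (cases M) (auto simp: delete_at_def split: if_splits intro!: cd_typing.cd_var)
next
  case (cd_app B M1 s t N t')
  then show ?case by (cases M) (auto split: if_splits intro!: cd_typing.cd_app)
next
  case (cd_abs s B M1 t)
  then show ?case
    by (cases M) (auto split: if_splits simp: delete_at_extend[symmetric] intro!: cd_typing.cd_abs)
qed (auto intro: cd_typing.cd_cap)

lemma cd_typing_insert_at_LVar: "cd_typing B N t \<Longrightarrow> cd_typing (insert_at B k t) (LVar k) t"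
  by (auto simp: insert_at_def intro!: cd_typing.cd_var leq_CD_refl dest: cd_typing_omega_free)

text \<open>The type \<open>s0\<close> of \<open>N\<close> is needed only when index \<open>k\<close> does not occur in \<open>A\<close>.\<close>
lemma cd_typing_subst_inv:
  "cd_typing B (subst A N k) t \<Longrightarrow> cd_typing B N s0
   \<Longrightarrow> \<exists>s. cd_typing (insert_at B k s) A t \<and> cd_typing B N s"
proof (induction B "subst A N k" t arbitrary: A N k s0 rule: cd_typing.induct)
  case (cd_var B x s t)
  show ?case
  proof (cases "A = LVar k")
    case True
    then show ?thesis using cd_var by (auto intro!: cd_typing_insert_at_LVar cd_typing.cd_var)
  next
    case False
    then obtain i where "A = LVar i" "i \<noteq> k" using cd_var by (cases A) (auto split: if_splits)
    then show ?thesis using cd_var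
      by (intro exI[of _ s0]) (auto simp: insert_at_def split: if_splits intro!: cd_typing.cd_var)
  qed
next
  case (cd_app B M s t N' t')
  show ?case
  proof (cases "A = LVar k")
    case True
    then show ?thesis using cd_app by (auto intro!: cd_typing_insert_at_LVar cd_typing.cd_app)
  next
    case False
    then obtain A1 A2 where A: "A = LApp A1 A2" using cd_app by (cases A) (auto split: if_splits)
    then have "M = subst A1 N k" "N' = subst A2 N k" using cd_app by auto
    with cd_app.hyps(2)[of A1 N k s0] cd_app.hyps(4)[of A2 N k s0] cd_app.prems
    obtain s1 s2 where
      1: "cd_typing (insert_at B k s1) A1 (Arr s t)" "cd_typing B N s1" and
      2: "cd_typing (insert_at B k s2) A2 s" "cd_typing B N s2" by auto
    have "omega_free s1" "omega_free s2" using 1 2 cd_typing_omega_free by auto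
    then have "cd_typing (insert_at B k (Cap s1 s2)) A1 (Arr s t)"
      "cd_typing (insert_at B k (Cap s1 s2)) A2 s"
      using 1(1) 2(1) by (auto intro: cd_typing_refines refines_insert_at_Cap1 refines_insert_at_Cap2)
    with 1(2) 2(2) A \<open>leq CD t t'\<close> show ?thesis
      by (intro exI[of _ "Cap s1 s2"]) (auto intro: cd_typing.cd_app cd_typing.cd_cap)
  qed
next
  case (cd_abs s B M t)
  show ?case
  proof (cases "A = LVar k")
    case True
    then show ?thesis using cd_abs by (auto intro!: cd_typing_insert_at_LVar cd_typing.cd_abs)
  next
    case False
    then obtain A' where A: "A = LAbs A'" and M: "M = subst A' (lift N 0) (Suc k)"
      using cd_abs by (cases A) (auto split: if_splits)
    have "cd_typing (extend B s) (lift N 0) s0"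
      using cd_typing_lift[OF cd_abs.prems, of 0 s] by (simp add: insert_at_0)
    with cd_abs.hyps(3) M obtain s' where
      1: "cd_typing (insert_at (extend B s) (Suc k) s') A' t" "cd_typing (extend B s) (lift N 0) s'"
      by blast
    have "cd_typing B N s'" using cd_typing_unlift[OF 1(2)] by (simp add: delete_at_0_extend)
    then show ?thesis using 1(1) A cd_abs.hyps(1)
      by (auto simp: extend_insert_at[symmetric] intro!: cd_typing.cd_abs)
  qed
next
  case (cd_cap B s t)
  then obtain s1 s2 where
    1: "cd_typing (insert_at B k s1) A s" "cd_typing B N s1" and
    2: "cd_typing (insert_at B k s2) A t" "cd_typing B N s2" by blast
  have "omega_free s1" "omega_free s2" using 1 2 cd_typing_omega_free by auto
  then have "cd_typing (insert_at B k (Cap s1 s2)) A s" "cd_typing (insert_at B k (Cap s1 s2)) A t"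
    using 1(1) 2(1) by (auto intro: cd_typing_refines refines_insert_at_Cap1 refines_insert_at_Cap2)
  with 1(2) 2(2) show ?case
    by (intro exI[of _ "Cap s1 s2"]) (auto intro: cd_typing.cd_cap)
qed

lemma cd_typing_expand_redex:
  assumes "cd_typing B N s0" and "cd_typing B (subst A N 0) t"
  shows "cd_typing B (LApp (LAbs A) N) t"
proof -
  from cd_typing_subst_inv[OF assms(2,1)] obtain s where
    A: "cd_typing (extend B s) A t" and N: "cd_typing B N s" by (auto simp: insert_at_0)
  have "omega_free s" "omega_free t" using A N cd_typing_omega_free by auto
  then show ?thesis using A N by (auto intro!: cd_typing.cd_app cd_typing.cd_abs leq_CD_refl)
qed

definition apps :: "lterm \<Rightarrow> lterm list \<Rightarrow> lterm" where
  "apps h Ps = foldl LApp h Ps"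

lemma apps_Nil [simp]: "apps h [] = h"
  and apps_Cons [simp]: "apps h (P # Ps) = apps (LApp h P) Ps"
  and apps_snoc: "apps h (Ps @ [P]) = LApp (apps h Ps) P"
  by (simp_all add: apps_def)

fun arrows :: "itype list \<Rightarrow> itype \<Rightarrow> itype" where
  "arrows [] t = t"
| "arrows (s # ss) t = Arr s (arrows ss t)"

lemma omega_free_arrows: "omega_free (arrows ss t) \<longleftrightarrow> (\<forall>s\<in>set ss. omega_free s) \<and> omega_free t"
  by (induction ss) auto

lemma cd_typing_apps:
  "cd_typing B h (arrows ss t) \<Longrightarrow> list_all2 (cd_typing B) Ps ss \<Longrightarrow> cd_typing B (apps h Ps) t"
proof (induction Ps arbitrary: h ss)
  case (Cons P Ps)
  then obtain s ss' where ss: "ss = s # ss'" "cd_typing B P s" "list_all2 (cd_typing B) Ps ss'"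
    by (cases ss) auto
  have "omega_free (arrows ss' t)" using cd_typing_omega_free[OF Cons.prems(1)] ss by simp
  then have "cd_typing B (LApp h P) (arrows ss' t)"
    using Cons.prems(1) ss by (auto intro!: cd_typing.cd_app leq_CD_refl)
  then show ?case using Cons.IH ss by auto
qed simp

lemma cd_typing_apps_cong:
  "cd_typing B (apps X Ps) t \<Longrightarrow> (\<And>t. cd_typing B X t \<Longrightarrow> cd_typing B Y t) \<Longrightarrow> cd_typing B (apps Y Ps) t"
proof (induction Ps arbitrary: X Y)
  case (Cons P Ps)
  have "cd_typing B (LApp Y P) t" if "cd_typing B (LApp X P) t" for t
    using that Cons.prems(2)
    by (induction B "LApp X P" t rule: cd_typing.induct) (auto intro: cd_typing.cd_app cd_typing.cd_cap)
  with Cons show ?case by simp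
qed simp

definition cd_typable :: "lterm \<Rightarrow> bool" where
  "cd_typable M \<longleftrightarrow> (\<exists>B t. is_basis CD B \<and> cd_typing B M t)"

lemma cd_typable_common_basis:
  "\<forall>P\<in>set Ps. cd_typable P \<Longrightarrow> \<exists>B ss. is_basis CD B \<and> list_all2 (cd_typing B) Ps ss"
proof (induction Ps)
  case Nil
  show ?case by (intro exI[of _ Map.empty]) (simp add: is_basis_def)
next
  case (Cons P Ps)
  then obtain B ss where B: "is_basis CD B" "list_all2 (cd_typing B) Ps ss" by auto
  from Cons.prems obtain B1 t where B1: "is_basis CD B1" "cd_typing B1 P t" by (auto simp: cd_typable_def)
  have "list_all2 (cd_typing (meet_basis B1 B)) (P # Ps) (t # ss)"
    using B B1 by (auto intro: cd_typing_refines refines_meet_basis1 refines_meet_basis2 elim!: list_all2_mono)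
  then show ?case using B B1 is_basis_meet_basis by blast
qed

lemma cd_typable_LVar_apps:
  assumes "\<forall>P\<in>set Ps. cd_typable P"
  shows "cd_typable (apps (LVar x) Ps)"
proof -
  obtain B ss where B: "is_basis CD B" "list_all2 (cd_typing B) Ps ss"
    using cd_typable_common_basis[OF assms] by blast
  have "\<forall>s\<in>set ss. omega_free s" using B(2)
    by (induction rule: list_all2_induct) (auto dest: cd_typing_omega_free)
  then have of: "omega_free (arrows ss (Atom 0))" by (simp add: omega_free_arrows)
  define Bx where "Bx = (Map.empty(x \<mapsto> arrows ss (Atom 0)) :: basis)"
  have Bx: "is_basis CD Bx" using of by (auto simp: is_basis_CD_iff Bx_def)
  let ?B = "meet_basis B Bx"
  have "cd_typing Bx (LVar x) (arrows ss (Atom 0))"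
    using of by (auto simp: Bx_def intro!: cd_typing.cd_var leq_CD_refl)
  then have "cd_typing ?B (LVar x) (arrows ss (Atom 0))"
    using B Bx by (auto intro: cd_typing_refines refines_meet_basis2)
  moreover have "list_all2 (cd_typing ?B) Ps ss"
    using B Bx by (auto intro: cd_typing_refines refines_meet_basis1 elim!: list_all2_mono)
  ultimately have "cd_typing ?B (apps (LVar x) Ps) (Atom 0)" by (rule cd_typing_apps)
  then show ?thesis using is_basis_meet_basis[OF B(1) Bx] by (auto simp: cd_typable_def)
qed

lemma cd_typable_LAbs:
  assumes "cd_typable A"
  shows "cd_typable (LAbs A)"
proof -
  obtain B t where B: "is_basis CD B" "cd_typing B A t" using assms by (auto simp: cd_typable_def)
  define s where "s = (case B 0 of None \<Rightarrow> Atom 0 | Some s \<Rightarrow> s)"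
  have "omega_free s" using B by (auto simp: s_def is_basis_CD_iff split: option.splits)
  have "refines (extend (B \<circ> Suc) s) B"
    by (auto simp: refines_def extend_def s_def split: nat.splits option.splits)
  then have "cd_typing (B \<circ> Suc) (LAbs A) (Arr s t)"
    using B \<open>omega_free s\<close> by (auto intro: cd_typing.cd_abs cd_typing_refines)
  moreover have "dom (B \<circ> Suc) = Suc -` dom B" by auto
  then have "is_basis CD (B \<circ> Suc)"
    using B by (auto simp: is_basis_CD_iff intro: finite_vimageI)
  ultimately show ?thesis by (auto simp: cd_typable_def)
qed

lemma cd_typable_redex_apps:
  assumes "cd_typable N" and "cd_typable (apps (subst A N 0) Ps)"
  shows "cd_typable (apps (LApp (LAbs A) N) Ps)"
proof -
  obtain B1 B2 t s where B1: "is_basis CD B1" "cd_typing B1 (apps (subst A N 0) Ps) t"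
    and B2: "is_basis CD B2" "cd_typing B2 N s"
    using assms by (auto simp: cd_typable_def)
  let ?B = "meet_basis B1 B2"
  have "cd_typing ?B (apps (subst A N 0) Ps) t" "cd_typing ?B N s"
    using B1 B2 by (auto intro: cd_typing_refines refines_meet_basis1 refines_meet_basis2)
  then have "cd_typing ?B (apps (LApp (LAbs A) N) Ps) t"
    by (auto intro: cd_typing_apps_cong cd_typing_expand_redex)
  then show ?thesis using B1 B2 is_basis_meet_basis by (auto simp: cd_typable_def)
qed

inductive immediate_subterm :: "lterm \<Rightarrow> lterm \<Rightarrow> bool" where
  "immediate_subterm s (LApp s t)"
| "immediate_subterm t (LApp s t)"
| "immediate_subterm s (LAbs s)"

lemma size_subterm: "immediate_subterm\<^sup>+\<^sup>+ N M \<Longrightarrow> size N < size M"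
  by (induction rule: tranclp_induct) (auto elim: immediate_subterm.cases)

lemma beta_immediate_subterm:
  "immediate_subterm N M \<Longrightarrow> beta N N' \<Longrightarrow> \<exists>M'. beta M M' \<and> immediate_subterm N' M'"
  by (auto elim!: immediate_subterm.cases intro: immediate_subterm.intros beta.intros)

lemma beta_subterm:
  "immediate_subterm\<^sup>*\<^sup>* N M \<Longrightarrow> beta N N' \<Longrightarrow> \<exists>M'. beta M M' \<and> immediate_subterm\<^sup>*\<^sup>* N' M'"
proof (induction arbitrary: N' rule: converse_rtranclp_induct)
  case (step N K)
  then obtain K' where "beta K K'" "immediate_subterm N' K'"
    using beta_immediate_subterm by blast
  with step.IH show ?case by (auto intro: converse_rtranclp_into_rtranclp)
qed blast

text \<open>
  Induction over strongly normalizing terms along strict subterms and one-step reducts; it is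
  well founded because a reduct of a subterm is a subterm of a reduct.
\<close>
lemma SN_subterm_induct [consumes 1, case_names step]:
  assumes "SN M"
    and step: "\<And>M. (\<And>N. immediate_subterm\<^sup>+\<^sup>+ N M \<Longrightarrow> P N) \<Longrightarrow> (\<And>N. beta M N \<Longrightarrow> P N) \<Longrightarrow> P M"
  shows "P M"
proof -
  have "\<forall>K. immediate_subterm\<^sup>*\<^sup>* K M \<longrightarrow> P K"
    using \<open>SN M\<close> unfolding SN_def
  proof (induction rule: accp.induct)
    case (accI M)
    have "P K" if "immediate_subterm\<^sup>*\<^sup>* K M" for K
      using that
    proof (induction K rule: measure_induct_rule[of size])
      case (less K)
      show ?case
      proof (rule step)
        fix N assume "immediate_subterm\<^sup>+\<^sup>+ N K"
        with less show "P N" by (meson size_subterm rtranclp_trans tranclp_into_rtranclp)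
      next
        fix N assume "beta K N"
        with less.prems obtain M' where "beta M M'" "immediate_subterm\<^sup>*\<^sup>* N M'"
          using beta_subterm by blast
        with accI.IH show "P N" by blast
      qed
    qed
    then show ?case by blast
  qed
  then show ?thesis by blast
qed

lemma subterm_apps_head: "immediate_subterm\<^sup>*\<^sup>* h (apps h Ps)"
proof (induction Ps arbitrary: h)
  case (Cons P Ps)
  have "immediate_subterm h (LApp h P)" by (rule immediate_subterm.intros)
  with Cons[of "LApp h P"] show ?case by (auto intro: converse_rtranclp_into_rtranclp)
qed simp

lemma subterm_apps_arg: "P \<in> set Ps \<Longrightarrow> immediate_subterm\<^sup>+\<^sup>+ P (apps h Ps)"
proof (induction Ps arbitrary: h)
  case (Cons Q Ps)
  have "immediate_subterm Q (LApp h Q)" by (rule immediate_subterm.intros)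
  with subterm_apps_head[of "LApp h Q" Ps] Cons show ?case
    by (auto intro: rtranclp_into_tranclp2)
qed simp

lemma beta_apps: "beta X Y \<Longrightarrow> beta (apps X Ps) (apps Y Ps)"
  by (induction Ps arbitrary: X Y) (auto intro: beta.intros)

lemma lterm_head_cases:
  obtains (var) x Ps where "M = apps (LVar x) Ps"
  | (abs) A where "M = LAbs A"
  | (redex) A N Ps where "M = apps (LApp (LAbs A) N) Ps"
proof (induction M arbitrary: thesis)
  case (LVar x)
  then show ?case by (metis apps_Nil)
next
  case (LApp M1 M2)
  show ?case
  proof (rule LApp.IH(1))
    show "M1 = apps (LVar x) Ps \<Longrightarrow> thesis" for x Ps
      using LApp.prems(1)[of x "Ps @ [M2]"] by (simp add: apps_snoc)
    show "M1 = LAbs A \<Longrightarrow> thesis" for A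
      using LApp.prems(3)[of A M2 "[]"] by simp
    show "M1 = apps (LApp (LAbs A) N) Ps \<Longrightarrow> thesis" for A N Ps
      using LApp.prems(3)[of A N "Ps @ [M2]"] by (simp add: apps_snoc)
  qed
next
  case (LAbs A)
  then show ?case by blast
qed

lemma SN_cd_typable: "SN M \<Longrightarrow> cd_typable M"
proof (induction rule: SN_subterm_induct)
  case (step M)
  show ?case
  proof (cases M rule: lterm_head_cases)
    case (var x Ps)
    then show ?thesis using step subterm_apps_arg by (auto intro!: cd_typable_LVar_apps)
  next
    case (abs A)
    then have "immediate_subterm\<^sup>+\<^sup>+ A M" by (auto intro: immediate_subterm.intros)
    with step abs show ?thesis by (auto intro!: cd_typable_LAbs)
  next
    case (redex A N Ps)
    have "immediate_subterm N (LApp (LAbs A) N)" by (rule immediate_subterm.intros)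
    with subterm_apps_head[of "LApp (LAbs A) N" Ps] redex
    have "immediate_subterm\<^sup>+\<^sup>+ N M" by (auto intro: rtranclp_into_tranclp2)
    moreover have "beta M (apps (subst A N 0) Ps)"
      by (auto simp: redex intro!: beta_apps beta.intros)
    ultimately show ?thesis using step redex by (auto intro!: cd_typable_redex_apps)
  qed
qed

lemma leq_CD_imp_leq: "leq CD s t \<Longrightarrow> leq T s t"
  by (induction rule: leq.induct) (auto simp: over_def has_omega_def has_arrow_def intro: leq.intros)

lemma is_basis_CD_imp_is_basis: "is_basis CD B \<Longrightarrow> is_basis T B"
  by (auto simp: is_basis_def over_def has_omega_def)

lemma Rel_refl: "Rel R M M"
  by (cases R) (simp_all add: Rel_def beta_eq_def betaeta_eq_def)

lemma cd_typing_imp_typed: "cd_typing B M t \<Longrightarrow> \<exists>d. ess d = M \<and> typed T R B d t"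
proof (induction rule: cd_typing.induct)
  case (cd_var B x s t)
  then show ?case
    by (intro exI[of _ "DSub (DVar x) t"]) (auto intro: typed.intros leq_CD_imp_leq)
next
  case (cd_app B M s t N t')
  then obtain d e where "ess d = M" "typed T R B d (Arr s t)" "ess e = N" "typed T R B e s" by blast
  with cd_app.hyps(3) show ?case
    by (intro exI[of _ "DSub (DApp d e) t'"]) (auto intro: typed.intros leq_CD_imp_leq)
next
  case (cd_abs s B M t)
  then obtain d where "ess d = M" "typed T R (extend B s) d t" by blast
  with cd_abs.hyps(1) show ?case
    by (intro exI[of _ "DLam s d"]) (auto intro: typed.intros simp: over_def)
next
  case (cd_cap B M s t)
  then obtain d e where "ess d = M" "typed T R B d s" "ess e = M" "typed T R B e t" by blast
  then show ?case
    by (intro exI[of _ "DPair d e"]) (simp add: typed.capI Rel_refl)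
qed

theorem mainTheorem15:
  assumes "(T, R) \<in> ten_systems"
    and "SN M"
  shows "\<exists>B s d. is_basis T B \<and> ess d = M \<and> typed T R B d s"
proof -
  obtain B t where "is_basis CD B" "cd_typing B M t"
    using SN_cd_typable[OF \<open>SN M\<close>] by (auto simp: cd_typable_def)
  then show ?thesis using is_basis_CD_imp_is_basis cd_typing_imp_typed by blast
qed

end
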